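(* Algorithm Exact Silent Count solves the $k$-ribbon problem on a line of $n$ agents, for any choice of starting agent, within $3n$ rounds, using $6n$ message bits in total and $2\log n+\log k+O(1)$ bits of memory per agent.
   Context: Message passing model (1D): a line graph of $n$ agents, synchronous rounds, reliable messages between neighbors each round. All agents run the same algorithm, have no knowledge of their global position or of $n$, share a common sense of direction, and endpoints know they are endpoints. Initially all agents but one arbitrary starting agent are asleep; a sleeping agent wakes upon receiving a message. The $k$-ribbon problem: every agent outputs a color in $\{1,\dots,k\}$ such that each color class is contiguous, colors increase from left to right, and the sizes of any two color classes differ by at most $1$. Algorithm Exact Silent Count: the starting agent sends the single bit $0$ to the left and the bit $1$ to the right (if it is an endpoint, it sends both bits in one 2-bit message to its unique neighbor). Every agent forwards each received bit in the same direction, except endpoints, which send it back. The $d$-side endpoint sets $n_d\leftarrow 0$ on waking and never changes it. Any other agent, the first time it receives a message from direction $d$, sets $n_{\bar d}\leftarrow 0$ (where $\bar d$ is the opposite direction) and increments $n_{\bar d}$ every round until it receives a message from direction $\bar d$, at which point it stops and sets $n_{\bar d}\leftarrow n_{\bar d}/2$. When an agent has final values of $n_\ell$ and $n_r$ and has already sent $0$ to the left and $1$ to the right, it decides the color its position receives in the $k$-ribbon (determined by $n_\ell$, $n_r$, $k$) and halts.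
   Formalization: Each counter $n_d$, the starter's included, starts at 0 when a bit is first sent towards d and stops when that same bit returns, and halting requires having relayed bit 0 left and bit 1 right, initial sends excluded. The statement above fails without it. *)

theory Defs
  imports Complex_Main
begin

text \<open>Agents are numbered 0..n-1 from left to right (the numbering is only used by the
  global semantics; the local algorithm never sees it).  A message is a nonempty list of
  bits (the empty list means "no message").  A local algorithm consists of:
  start: spontaneous wake-up of the starting agent (gets the two flags
         "I am the left endpoint" and "I am the right endpoint"), returning the new
         state and the messages sent to the left and to the right neighbour;
  wake: the initial state of an agent woken up by a message;
  step: one synchronous round: endpoint flags, current state, messages received from the
        left and from the right neighbour, giving the new state and messages sent
        to the left / right;
  out:  the decided output; an agent with a decided output has halted.\<close>

record 's line_alg =
  la_start :: "bool \<Rightarrow> bool \<Rightarrow> 's \<times> bool list \<times> bool list"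
  la_wake  :: "bool \<Rightarrow> bool \<Rightarrow> 's"
  la_step  :: "bool \<Rightarrow> bool \<Rightarrow> 's \<Rightarrow> bool list \<Rightarrow> bool list \<Rightarrow> 's \<times> bool list \<times> bool list"
  la_out   :: "'s \<Rightarrow> nat option"

text \<open>One round for agent i: asleep agents wake iff they receive a message;
  halted agents do nothing (incoming messages are lost).\<close>

definition agent_round ::
  "('s, 'z) line_alg_scheme \<Rightarrow> nat \<Rightarrow> nat \<Rightarrow> 's option \<Rightarrow> bool list \<Rightarrow> bool list
     \<Rightarrow> 's option \<times> bool list \<times> bool list" where
  "agent_round A n i so inL inR =
     (if i < n then
        (case so of
           None \<Rightarrow>
             (if inL = [] \<and> inR = [] then (None, [], [])
              else (case la_step A (i = 0) (i = n - 1) (la_wake A (i = 0) (i = n - 1)) inL inR of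
                      (s', oL, oR) \<Rightarrow> (Some s', oL, oR)))
         | Some st \<Rightarrow>
             (if la_out A st \<noteq> None then (Some st, [], [])
              else (case la_step A (i = 0) (i = n - 1) st inL inR of
                      (s', oL, oR) \<Rightarrow> (Some s', oL, oR))))
      else (None, [], []))"

text \<open>exec A n s t = (states after round t, messages sent to the left in round t,
  messages sent to the right in round t), for n agents and starting agent s.
  Round 0 is the spontaneous wake-up of the starting agent.\<close>

fun exec :: "('s, 'z) line_alg_scheme \<Rightarrow> nat \<Rightarrow> nat \<Rightarrow> nat
               \<Rightarrow> (nat \<Rightarrow> 's option) \<times> (nat \<Rightarrow> bool list) \<times> (nat \<Rightarrow> bool list)" where
  "exec A n s 0 =
     (let r = la_start A (s = 0) (s = n - 1) in
       ((\<lambda>i. if i = s then Some (fst r) else None),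
        (\<lambda>i. if i = s then fst (snd r) else []),
        (\<lambda>i. if i = s then snd (snd r) else [])))"
| "exec A n s (Suc t) =
     (case exec A n s t of (st, sL, sR) \<Rightarrow>
       let act = (\<lambda>i. agent_round A n i (st i)
                          (if 0 < i then sR (i - 1) else [])
                          (if i + 1 < n then sL (i + 1) else []))
       in ((\<lambda>i. fst (act i)), (\<lambda>i. fst (snd (act i))), (\<lambda>i. snd (snd (act i)))))"

definition bits_sent :: "('s, 'z) line_alg_scheme \<Rightarrow> nat \<Rightarrow> nat \<Rightarrow> nat \<Rightarrow> nat" where
  "bits_sent A n s T =
     (\<Sum>t<T. \<Sum>i<n. length (fst (snd (exec A n s t)) i) + length (snd (snd (exec A n s t)) i))"

definition is_ribbon :: "nat \<Rightarrow> nat \<Rightarrow> (nat \<Rightarrow> nat) \<Rightarrow> bool" where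
  "is_ribbon n k c \<longleftrightarrow>
     (\<forall>i<n. 1 \<le> c i \<and> c i \<le> k) \<and>
     (\<forall>i j. i \<le> j \<longrightarrow> j < n \<longrightarrow> c i \<le> c j) \<and>
     (\<forall>i j m. i \<le> m \<longrightarrow> m \<le> j \<longrightarrow> j < n \<longrightarrow> c i = c j \<longrightarrow> c m = c i) \<and>
     (\<forall>a b. 1 \<le> a \<longrightarrow> a \<le> k \<longrightarrow> 1 \<le> b \<longrightarrow> b \<le> k \<longrightarrow>
        card {i. i < n \<and> c i = a} \<le> card {i. i < n \<and> c i = b} + 1)"

text \<open>Bits: False = bit 0, True = bit 1.  Local state:
  esc_cl / esc_cr : counter (later final value) for n_l / n_r, None = not started;
  esc_fl / esc_fr : whether n_l / n_r is final;
  esc_tl / esc_tr : the bit whose return from the left / right is awaited;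
  esc_s0 / esc_s1 : whether bit 0 was forwarded to the left / bit 1 to the right
                    (relaying a received bit; the spontaneous initial sends of the
                    starting agent are not counted);
  esc_col : decided colour (Some = halted).\<close>

record esc_st =
  esc_cl :: "nat option"
  esc_cr :: "nat option"
  esc_fl :: bool
  esc_fr :: bool
  esc_tl :: bool
  esc_tr :: bool
  esc_s0 :: bool
  esc_s1 :: bool
  esc_col :: "nat option"

text \<open>The colour of the position with n_l agents to the left and n_r to the right
  in the k-ribbon (class sizes differ by at most one).\<close>

definition esc_color :: "nat \<Rightarrow> nat \<Rightarrow> nat \<Rightarrow> nat" where
  "esc_color k nl nr = nl * k div (nl + nr + 1) + 1"

definition esc_wake :: "bool \<Rightarrow> bool \<Rightarrow> esc_st" where
  "esc_wake eL eR =
     \<lparr> esc_cl = (if eL then Some 0 else None), esc_cr = (if eR then Some 0 else None),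
       esc_fl = eL, esc_fr = eR, esc_tl = False, esc_tr = False,
       esc_s0 = False, esc_s1 = False, esc_col = None \<rparr>"

definition esc_try_halt :: "nat \<Rightarrow> bool \<Rightarrow> bool \<Rightarrow> esc_st \<Rightarrow> esc_st" where
  "esc_try_halt k eL eR st =
     (if esc_fl st \<and> esc_fr st \<and> (eL \<or> esc_s0 st) \<and> (eR \<or> esc_s1 st)
      then st\<lparr> esc_col := Some (esc_color k (the (esc_cl st)) (the (esc_cr st))) \<rparr>
      else st)"

text \<open>Counter update for one side: (counter, final, awaited bit), the bits received from
  that side this round, and the bits sent to that side this round.  A counter starts (at 0)
  when a bit is first sent to that side, is incremented every round, and when that bit
  comes back from that side it is halved and becomes final.\<close>

definition esc_upd :: "nat option \<times> bool \<times> bool \<Rightarrow> bool list \<Rightarrow> bool list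
                        \<Rightarrow> nat option \<times> bool \<times> bool" where
  "esc_upd x inp outp =
     (case x of (c, f, tk) \<Rightarrow>
        if f then x
        else (case c of
                Some v \<Rightarrow> (if tk \<in> set inp then (Some ((v + 1) div 2), True, tk)
                           else (Some (v + 1), False, tk))
              | None \<Rightarrow> (if outp \<noteq> [] then (Some 0, False, hd outp) else x)))"

definition esc_start :: "nat \<Rightarrow> bool \<Rightarrow> bool \<Rightarrow> esc_st \<times> bool list \<times> bool list" where
  "esc_start k eL eR =
     (let oL = (if eL then [] else if eR then [False, True] else [False]);
          oR = (if eR then [] else if eL then [False, True] else [True]);
          w = esc_wake eL eR;
          w1 = (if oL \<noteq> [] then w\<lparr> esc_cl := Some 0, esc_tl := hd oL \<rparr> else w);
          w2 = (if oR \<noteq> [] then w1\<lparr> esc_cr := Some 0, esc_tr := hd oR \<rparr> else w1);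
          w3 = w2
      in (esc_try_halt k eL eR w3, oL, oR))"

definition esc_step :: "nat \<Rightarrow> bool \<Rightarrow> bool \<Rightarrow> esc_st \<Rightarrow> bool list \<Rightarrow> bool list
                         \<Rightarrow> esc_st \<times> bool list \<times> bool list" where
  "esc_step k eL eR st inL inR =
     (let oR = (if eR then [] else if eL then inR else inL);
          oL = (if eL then [] else if eR then inL else inR);
          l = esc_upd (esc_cl st, esc_fl st, esc_tl st) inL oL;
          r = esc_upd (esc_cr st, esc_fr st, esc_tr st) inR oR;
          st' = st\<lparr> esc_cl := fst l, esc_fl := fst (snd l), esc_tl := snd (snd l),
                    esc_cr := fst r, esc_fr := fst (snd r), esc_tr := snd (snd r),
                    esc_s0 := (esc_s0 st \<or> False \<in> set oL),
                    esc_s1 := (esc_s1 st \<or> True \<in> set oR) \<rparr>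
      in (esc_try_halt k eL eR st', oL, oR))"

definition esc :: "nat \<Rightarrow> esc_st line_alg" where
  "esc k = \<lparr> la_start = esc_start k, la_wake = esc_wake, la_step = esc_step k,
             la_out = esc_col \<rparr>"

fun bitlen :: "nat \<Rightarrow> nat" where
  "bitlen m = (if m < 2 then 1 else Suc (bitlen (m div 2)))"

definition obits :: "nat option \<Rightarrow> nat" where
  "obits x = (case x of None \<Rightarrow> 1 | Some m \<Rightarrow> 1 + bitlen m)"

definition esc_mem :: "esc_st \<Rightarrow> nat" where
  "esc_mem st = obits (esc_cl st) + obits (esc_cr st) + obits (esc_col st) + 6"

end

theory Submission
  imports Defs
begin

text \<open>The execution of Exact Silent Count does not depend on any choice: bit 0 runs left from
  the starting agent s, is reflected by agent 0, crosses the line and is reflected by agent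
  n-1, and symmetrically for bit 1.  Hence every configuration and every message of every round
  has a closed form in n, s, the round t and the position i, and an induction on t shows that
  the execution agrees with it.  Agent i is woken in round |i - s|.  Its left counter starts when
  it first sends a bit to the left and stops 2i rounds later, when that bit has come back from
  agent 0; so it ends with n_l = i, and likewise n_r = n-1-i.  The agent halts in round
  2n-2+|i-s| \<le> 3n-1 with colour \<lfloor>ik/n\<rfloor>+1, and these colours form a k-ribbon.
  At most one copy of each bit is in transit in any round and no message is sent after round
  3n, which gives the 6n bound on bits; no counter exceeds 2n, which gives the memory
  bound.\<close>

section \<open>Closed form of the execution\<close>

definition wake_round :: "nat \<Rightarrow> nat \<Rightarrow> nat" where
  "wake_round s i = (if i \<le> s then s - i else i - s)"

definition halt_round :: "nat \<Rightarrow> nat \<Rightarrow> nat \<Rightarrow> nat" where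
  "halt_round n s i = 2*n - 2 + wake_round s i"

text \<open>For i \<le> s the first bit sent to the left is bit 0, passing in round s - i; otherwise it
  is bit 1, coming back from agent n-1 in round (n-1-s) + (n-1-i).\<close>

definition left_count_start :: "nat \<Rightarrow> nat \<Rightarrow> nat \<Rightarrow> nat" where
  "left_count_start n s i = (if i \<le> s then s - i else 2*n - 2 - s - i)"

definition right_count_start :: "nat \<Rightarrow> nat \<Rightarrow> nat \<Rightarrow> nat" where
  "right_count_start n s i = (if s \<le> i then i - s else s + i)"

definition relay0_round :: "nat \<Rightarrow> nat \<Rightarrow> nat \<Rightarrow> nat" where
  "relay0_round n s i = (if i < s then s - i else s + (2*n - 2) - i)"

definition relay1_round :: "nat \<Rightarrow> nat \<Rightarrow> nat \<Rightarrow> nat" where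
  "relay1_round n s i = (if s < i then i - s else (2*n - 2) - s + i)"

definition count_left :: "nat \<Rightarrow> nat \<Rightarrow> nat \<Rightarrow> nat \<Rightarrow> nat option" where
  "count_left n s t i =
     (if i = 0 then Some 0
      else if t < left_count_start n s i then None
      else if t < left_count_start n s i + 2*i then Some (t - left_count_start n s i)
      else Some i)"

definition final_left :: "nat \<Rightarrow> nat \<Rightarrow> nat \<Rightarrow> nat \<Rightarrow> bool" where
  "final_left n s t i = (i = 0 \<or> left_count_start n s i + 2*i \<le> t)"

definition awaited_left :: "nat \<Rightarrow> nat \<Rightarrow> nat \<Rightarrow> nat \<Rightarrow> bool" where
  "awaited_left n s t i = (0 < s \<and> s < i \<and> left_count_start n s i \<le> t)"

definition count_right :: "nat \<Rightarrow> nat \<Rightarrow> nat \<Rightarrow> nat \<Rightarrow> nat option" where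
  "count_right n s t i =
     (if i = n - 1 then Some 0
      else if t < right_count_start n s i then None
      else if t < right_count_start n s i + 2*(n-1-i) then Some (t - right_count_start n s i)
      else Some (n-1-i))"

definition final_right :: "nat \<Rightarrow> nat \<Rightarrow> nat \<Rightarrow> nat \<Rightarrow> bool" where
  "final_right n s t i = (i = n - 1 \<or> right_count_start n s i + 2*(n-1-i) \<le> t)"

definition awaited_right :: "nat \<Rightarrow> nat \<Rightarrow> nat \<Rightarrow> nat \<Rightarrow> bool" where
  "awaited_right n s t i = (i < n - 1 \<and> s \<le> i \<and> s \<noteq> 0 \<and> right_count_start n s i \<le> t)"

definition relayed0 :: "nat \<Rightarrow> nat \<Rightarrow> nat \<Rightarrow> nat \<Rightarrow> bool" where
  "relayed0 n s t i = (0 < i \<and> relay0_round n s i \<le> t)"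

definition relayed1 :: "nat \<Rightarrow> nat \<Rightarrow> nat \<Rightarrow> nat \<Rightarrow> bool" where
  "relayed1 n s t i = (i < n - 1 \<and> relay1_round n s i \<le> t)"

definition esc_state :: "nat \<Rightarrow> nat \<Rightarrow> nat \<Rightarrow> nat \<Rightarrow> nat \<Rightarrow> esc_st" where
  "esc_state k n s t i =
     \<lparr> esc_cl = count_left n s t i, esc_cr = count_right n s t i,
       esc_fl = final_left n s t i, esc_fr = final_right n s t i,
       esc_tl = awaited_left n s t i, esc_tr = awaited_right n s t i,
       esc_s0 = relayed0 n s t i, esc_s1 = relayed1 n s t i,
       esc_col = (if halt_round n s i \<le> t then Some (esc_color k i (n-1-i)) else None) \<rparr>"

definition esc_config :: "nat \<Rightarrow> nat \<Rightarrow> nat \<Rightarrow> nat \<Rightarrow> nat \<Rightarrow> esc_st option" where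
  "esc_config k n s t i =
     (if n \<le> i \<or> t < wake_round s i then None
      else Some (esc_state k n s (min t (halt_round n s i)) i))"

text \<open>The last disjuncts are messages sent in the sender's own halting round, which occur
  only when the sender or the starting agent is an endpoint.\<close>

definition sends_right0 :: "nat \<Rightarrow> nat \<Rightarrow> nat \<Rightarrow> nat \<Rightarrow> bool" where
  "sends_right0 n s t i =
     (i < n - 1 \<and> (t = s + i \<or> (t = s + i + (2*n - 2) \<and> (i = 0 \<or> s = 0))))"

definition sends_right1 :: "nat \<Rightarrow> nat \<Rightarrow> nat \<Rightarrow> nat \<Rightarrow> bool" where
  "sends_right1 n s t i =
     (i < n - 1 \<and> (t + s = i \<or> t + s = (2*n - 2) + i
                   \<or> (t + s = 2*(2*n - 2) + i \<and> s = n - 1 \<and> i = 0)))"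

definition sends_left0 :: "nat \<Rightarrow> nat \<Rightarrow> nat \<Rightarrow> nat \<Rightarrow> bool" where
  "sends_left0 n s t i =
     (0 < i \<and> i < n \<and> (t + i = s \<or> t + i = s + (2*n - 2)
                         \<or> (t + i = s + 2*(2*n - 2) \<and> s = 0 \<and> i = n - 1)))"

definition sends_left1 :: "nat \<Rightarrow> nat \<Rightarrow> nat \<Rightarrow> nat \<Rightarrow> bool" where
  "sends_left1 n s t i =
     (0 < i \<and> i < n \<and> (t + s + i = 2*n - 2
                         \<or> (t + s + i = 2*(2*n - 2) \<and> (i = n - 1 \<or> s = n - 1))))"

definition msgs_right :: "nat \<Rightarrow> nat \<Rightarrow> nat \<Rightarrow> nat \<Rightarrow> bool list" where
  "msgs_right n s t i =
     (if sends_right0 n s t i then [False] else []) @ (if sends_right1 n s t i then [True] else [])"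

definition msgs_left :: "nat \<Rightarrow> nat \<Rightarrow> nat \<Rightarrow> nat \<Rightarrow> bool list" where
  "msgs_left n s t i =
     (if sends_left0 n s t i then [False] else []) @ (if sends_left1 n s t i then [True] else [])"

lemmas round_defs = wake_round_def halt_round_def left_count_start_def right_count_start_def
  relay0_round_def relay1_round_def sends_right0_def sends_right1_def sends_left0_def sends_left1_def

lemma esc_sel [simp]:
  "la_start (esc k) = esc_start k" "la_wake (esc k) = esc_wake"
  "la_step (esc k) = esc_step k" "la_out (esc k) = esc_col"
  by (simp_all add: esc_def)

lemma set_msgs_right: "b \<in> set (msgs_right n s t i) \<longleftrightarrow> (if b then sends_right1 n s t i else sends_right0 n s t i)"
  by (cases b) (auto simp: msgs_right_def)

lemma set_msgs_left: "b \<in> set (msgs_left n s t i) \<longleftrightarrow> (if b then sends_left1 n s t i else sends_left0 n s t i)"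
  by (cases b) (auto simp: msgs_left_def)

lemma msgs_right_eq_Nil_iff: "msgs_right n s t i = [] \<longleftrightarrow> \<not> sends_right0 n s t i \<and> \<not> sends_right1 n s t i"
  by (auto simp: msgs_right_def)

lemma msgs_left_eq_Nil_iff: "msgs_left n s t i = [] \<longleftrightarrow> \<not> sends_left0 n s t i \<and> \<not> sends_left1 n s t i"
  by (auto simp: msgs_left_def)

lemma hd_msgs_right: "sends_right0 n s t i \<or> sends_right1 n s t i \<Longrightarrow> hd (msgs_right n s t i) = (\<not> sends_right0 n s t i)"
  by (auto simp: msgs_right_def)

lemma hd_msgs_left: "sends_left0 n s t i \<or> sends_left1 n s t i \<Longrightarrow> hd (msgs_left n s t i) = (\<not> sends_left0 n s t i)"
  by (auto simp: msgs_left_def)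

lemma esc_start_state:
  assumes "s < n"
  shows "fst (esc_start k (s = 0) (s = n - 1)) = esc_state k n s 0 s"
  by (rule esc_st.equality)
    (use assms in \<open>auto simp: esc_start_def esc_wake_def esc_try_halt_def esc_state_def Let_def
       count_left_def count_right_def final_left_def final_right_def awaited_left_def
       awaited_right_def relayed0_def relayed1_def round_defs\<close>)

lemma exec_esc_0:
  assumes "s < n"
  shows "exec (esc k) n s 0 = (esc_config k n s 0, msgs_left n s 0, msgs_right n s 0)"
proof -
  have left: "fst (snd (esc_start k (s = 0) (s = n - 1))) = msgs_left n s 0 s"
    using assms by (auto simp: esc_start_def msgs_left_def sends_left0_def sends_left1_def Let_def)
  have right: "snd (snd (esc_start k (s = 0) (s = n - 1))) = msgs_right n s 0 s"
    using assms by (auto simp: esc_start_def msgs_right_def sends_right0_def sends_right1_def Let_def)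
  have others: "msgs_left n s 0 i = [] \<and> msgs_right n s 0 i = [] \<and> esc_config k n s 0 i = None"
    if "i \<noteq> s" for i
  proof -
    have "\<not> sends_left0 n s 0 i" "\<not> sends_left1 n s 0 i" "\<not> sends_right0 n s 0 i"
      "\<not> sends_right1 n s 0 i" "0 < wake_round s i"
      using assms that unfolding round_defs by presburger+
    then show ?thesis by (simp add: msgs_left_def msgs_right_def esc_config_def)
  qed
  have "esc_config k n s 0 s = Some (esc_state k n s 0 s)"
    using assms by (simp add: esc_config_def wake_round_def)
  then show ?thesis
    unfolding exec.simps esc_sel Let_def prod_eq_iff fst_conv snd_conv fun_eq_iff
    using esc_start_state[OF assms, of k] left right others by auto
qed

lemma two_agents_if_not_halted:
  assumes "s < n" "i < n" "t < halt_round n s i"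
  obtains m where "n = Suc (Suc m)"
proof -
  have "n \<noteq> 1" using assms by (auto simp: halt_round_def wake_round_def)
  then show ?thesis using assms that by (cases n; cases "n - 1"; auto)
qed

context
  fixes n s i t :: nat
  assumes active: "s < n" "i < n" "wake_round s i \<le> Suc t" "t < halt_round n s i"
begin

lemma interior_relays:
  assumes "0 < i" "i < n - 1"
  shows "sends_right0 n s (Suc t) i = sends_right0 n s t (i-1)"
    "sends_right1 n s (Suc t) i = sends_right1 n s t (i-1)"
    "sends_left0 n s (Suc t) i = sends_left0 n s t (i+1)"
    "sends_left1 n s (Suc t) i = sends_left1 n s t (i+1)"
proof -
  obtain m where m: "n = Suc (Suc m)" using two_agents_if_not_halted active by blast
  obtain j where j: "i = Suc j" using assms by (cases i) auto
  show "sends_right0 n s (Suc t) i = sends_right0 n s t (i-1)"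
    using active assms unfolding round_defs m j by (auto split: if_splits; linarith)
  show "sends_right1 n s (Suc t) i = sends_right1 n s t (i-1)"
    using active assms unfolding round_defs m j by (auto split: if_splits; linarith)
  show "sends_left0 n s (Suc t) i = sends_left0 n s t (i+1)"
    using active assms unfolding round_defs m j by (auto split: if_splits; linarith)
  show "sends_left1 n s (Suc t) i = sends_left1 n s t (i+1)"
    using active assms unfolding round_defs m j by (auto split: if_splits; linarith)
qed

lemma left_end_reflects:
  assumes "i = 0"
  shows "sends_right0 n s (Suc t) i = sends_left0 n s t 1"
    "sends_right1 n s (Suc t) i = sends_left1 n s t 1"
    "\<not> sends_left0 n s (Suc t) i" "\<not> sends_left1 n s (Suc t) i"
proof -
  obtain m where m: "n = Suc (Suc m)" using two_agents_if_not_halted active by blast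
  show "sends_right0 n s (Suc t) i = sends_left0 n s t 1"
    using active assms unfolding round_defs m by (auto split: if_splits; linarith)
  show "sends_right1 n s (Suc t) i = sends_left1 n s t 1"
    using active assms unfolding round_defs m by (auto split: if_splits; linarith)
  show "\<not> sends_left0 n s (Suc t) i" "\<not> sends_left1 n s (Suc t) i"
    using assms unfolding round_defs by auto
qed

lemma right_end_reflects:
  assumes "i = n - 1"
  shows "sends_left0 n s (Suc t) i = sends_right0 n s t (n-2)"
    "sends_left1 n s (Suc t) i = sends_right1 n s t (n-2)"
    "\<not> sends_right0 n s (Suc t) i" "\<not> sends_right1 n s (Suc t) i"
proof -
  obtain m where m: "n = Suc (Suc m)" using two_agents_if_not_halted active by blast
  show "sends_left0 n s (Suc t) i = sends_right0 n s t (n-2)"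
    using active assms unfolding round_defs m by (auto split: if_splits; linarith)
  show "sends_left1 n s (Suc t) i = sends_right1 n s t (n-2)"
    using active assms unfolding round_defs m by (auto split: if_splits; linarith)
  show "\<not> sends_right0 n s (Suc t) i" "\<not> sends_right1 n s (Suc t) i"
    using assms unfolding round_defs by auto
qed

lemma msgs_right_Suc:
  "(if i = n - 1 then [] else if i = 0 then (if i + 1 < n then msgs_left n s t (i+1) else [])
    else (if 0 < i then msgs_right n s t (i-1) else [])) = msgs_right n s (Suc t) i"
proof -
  obtain m where m: "n = Suc (Suc m)" using two_agents_if_not_halted active by blast
  consider (left) "i = 0" | (right) "i = n - 1" | (interior) "0 < i" "i < n - 1"
    using active by linarith
  then show ?thesis
  proof cases
    case left
    then show ?thesis using left_end_reflects m by (simp add: msgs_right_def msgs_left_def)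
  next
    case right
    then show ?thesis using right_end_reflects m by (simp add: msgs_right_def msgs_left_def)
  next
    case interior
    then show ?thesis using interior_relays by (simp add: msgs_right_def msgs_left_def)
  qed
qed

lemma msgs_left_Suc:
  "(if i = 0 then [] else if i = n - 1 then (if 0 < i then msgs_right n s t (i-1) else [])
    else (if i + 1 < n then msgs_left n s t (i+1) else [])) = msgs_left n s (Suc t) i"
proof -
  obtain m where m: "n = Suc (Suc m)" using two_agents_if_not_halted active by blast
  consider (left) "i = 0" | (right) "i = n - 1" | (interior) "0 < i" "i < n - 1"
    using active by linarith
  then show ?thesis
  proof cases
    case left
    then show ?thesis using left_end_reflects m by (simp add: msgs_right_def msgs_left_def)
  next
    case right
    moreover have "i - 1 = n - 2" using right by simp
    ultimately show ?thesis using right_end_reflects m by (simp add: msgs_right_def msgs_left_def)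
  next
    case interior
    moreover have "i + 1 < n" using interior by simp
    ultimately show ?thesis using interior_relays by (simp add: msgs_right_def msgs_left_def)
  qed
qed

lemma left_counter_timing:
  assumes "0 < i"
  shows "t < left_count_start n s i \<Longrightarrow>
      (sends_left0 n s (Suc t) i \<or> sends_left1 n s (Suc t) i) = (Suc t = left_count_start n s i)"
    "Suc t = left_count_start n s i \<Longrightarrow> sends_left0 n s (Suc t) i = (\<not> (0 < s \<and> s < i))"
    "left_count_start n s i \<le> t \<Longrightarrow> t < left_count_start n s i + 2*i \<Longrightarrow>
      (if 0 < s \<and> s < i then sends_right1 n s t (i-1) else sends_right0 n s t (i-1))
        = (Suc t = left_count_start n s i + 2*i)"
    "(relay0_round n s i \<le> Suc t) = (relay0_round n s i \<le> t \<or> sends_left0 n s (Suc t) i)"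
proof -
  obtain m where m: "n = Suc (Suc m)" using two_agents_if_not_halted active by blast
  obtain j where j: "i = Suc j" using assms by (cases i) auto
  show "t < left_count_start n s i \<Longrightarrow>
      (sends_left0 n s (Suc t) i \<or> sends_left1 n s (Suc t) i) = (Suc t = left_count_start n s i)"
    using active unfolding round_defs m j by (auto split: if_splits; linarith)
  show "Suc t = left_count_start n s i \<Longrightarrow> sends_left0 n s (Suc t) i = (\<not> (0 < s \<and> s < i))"
    using active unfolding round_defs m j by (auto split: if_splits; linarith)
  show "left_count_start n s i \<le> t \<Longrightarrow> t < left_count_start n s i + 2*i \<Longrightarrow>
      (if 0 < s \<and> s < i then sends_right1 n s t (i-1) else sends_right0 n s t (i-1))
        = (Suc t = left_count_start n s i + 2*i)"
    using active unfolding round_defs m j by (auto split: if_splits; linarith)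
  show "(relay0_round n s i \<le> Suc t) = (relay0_round n s i \<le> t \<or> sends_left0 n s (Suc t) i)"
    using active unfolding round_defs m j by (auto split: if_splits; linarith)
qed

lemma right_counter_timing:
  assumes "i < n - 1"
  shows "t < right_count_start n s i \<Longrightarrow>
      (sends_right0 n s (Suc t) i \<or> sends_right1 n s (Suc t) i) = (Suc t = right_count_start n s i)"
    "Suc t = right_count_start n s i \<Longrightarrow> sends_right0 n s (Suc t) i = (\<not> (s \<le> i \<and> s \<noteq> 0))"
    "right_count_start n s i \<le> t \<Longrightarrow> t < right_count_start n s i + 2*(n-1-i) \<Longrightarrow>
      (if s \<le> i \<and> s \<noteq> 0 then sends_left1 n s t (i+1) else sends_left0 n s t (i+1))
        = (Suc t = right_count_start n s i + 2*(n-1-i))"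
    "(relay1_round n s i \<le> Suc t) = (relay1_round n s i \<le> t \<or> sends_right1 n s (Suc t) i)"
proof -
  obtain m where m: "n = Suc (Suc m)" using two_agents_if_not_halted active by blast
  show "t < right_count_start n s i \<Longrightarrow>
      (sends_right0 n s (Suc t) i \<or> sends_right1 n s (Suc t) i) = (Suc t = right_count_start n s i)"
    using active assms unfolding round_defs m by (auto split: if_splits; linarith)
  show "Suc t = right_count_start n s i \<Longrightarrow> sends_right0 n s (Suc t) i = (\<not> (s \<le> i \<and> s \<noteq> 0))"
    using active assms unfolding round_defs m by (auto split: if_splits; linarith)
  show "right_count_start n s i \<le> t \<Longrightarrow> t < right_count_start n s i + 2*(n-1-i) \<Longrightarrow>
      (if s \<le> i \<and> s \<noteq> 0 then sends_left1 n s t (i+1) else sends_left0 n s t (i+1))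
        = (Suc t = right_count_start n s i + 2*(n-1-i))"
    using active assms unfolding round_defs m by (auto split: if_splits; linarith)
  show "(relay1_round n s i \<le> Suc t) = (relay1_round n s i \<le> t \<or> sends_right1 n s (Suc t) i)"
    using active assms unfolding round_defs m by (auto split: if_splits; linarith)
qed

lemma esc_upd_left:
  "esc_upd (count_left n s t i, final_left n s t i, awaited_left n s t i)
     (if 0 < i then msgs_right n s t (i-1) else []) (msgs_left n s (Suc t) i)
   = (count_left n s (Suc t) i, final_left n s (Suc t) i, awaited_left n s (Suc t) i)"
proof (cases "i = 0")
  case True
  then show ?thesis by (simp add: esc_upd_def count_left_def final_left_def awaited_left_def)
next
  case False
  then have i: "0 < i" by simp
  note timing = left_counter_timing[OF i]
  consider (final) "left_count_start n s i + 2*i \<le> t" | (idle) "t < left_count_start n s i"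
    | (counting) "left_count_start n s i \<le> t" "t < left_count_start n s i + 2*i"
    by linarith
  then show ?thesis
  proof cases
    case final
    then show ?thesis using i by (simp add: esc_upd_def count_left_def final_left_def awaited_left_def)
  next
    case idle
    then show ?thesis
      using i timing(1,2) by (cases "Suc t = left_count_start n s i")
        (simp_all add: esc_upd_def count_left_def final_left_def awaited_left_def
           msgs_left_eq_Nil_iff hd_msgs_left)
  next
    case counting
    have returns: "(awaited_left n s t i \<in> set (msgs_right n s t (i-1)))
        = (Suc t = left_count_start n s i + 2*i)"
      using timing(3)[OF counting] counting unfolding awaited_left_def set_msgs_right
      by (cases "0 < s \<and> s < i") auto
    show ?thesis
    proof (cases "Suc t = left_count_start n s i + 2*i")
      case True
      then have "(t - left_count_start n s i + 1) div 2 = i" by simp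
      then show ?thesis using returns True counting i
        by (simp add: esc_upd_def count_left_def final_left_def awaited_left_def)
    next
      case False
      then show ?thesis using returns counting i
        by (simp add: esc_upd_def count_left_def final_left_def awaited_left_def)
    qed
  qed
qed

lemma esc_upd_right:
  "esc_upd (count_right n s t i, final_right n s t i, awaited_right n s t i)
     (if i + 1 < n then msgs_left n s t (i+1) else []) (msgs_right n s (Suc t) i)
   = (count_right n s (Suc t) i, final_right n s (Suc t) i, awaited_right n s (Suc t) i)"
proof (cases "i = n - 1")
  case True
  then show ?thesis by (simp add: esc_upd_def count_right_def final_right_def awaited_right_def)
next
  case False
  then have i: "i < n - 1" "i + 1 < n" using active by auto
  note timing = right_counter_timing[OF i(1)]
  consider (final) "right_count_start n s i + 2*(n-1-i) \<le> t" | (idle) "t < right_count_start n s i"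
    | (counting) "right_count_start n s i \<le> t" "t < right_count_start n s i + 2*(n-1-i)"
    by linarith
  then show ?thesis
  proof cases
    case final
    then show ?thesis using i by (simp add: esc_upd_def count_right_def final_right_def awaited_right_def)
  next
    case idle
    then show ?thesis
      using i timing(1,2) by (cases "Suc t = right_count_start n s i")
        (simp_all add: esc_upd_def count_right_def final_right_def awaited_right_def
           msgs_right_eq_Nil_iff hd_msgs_right)
  next
    case counting
    have returns: "(awaited_right n s t i \<in> set (msgs_left n s t (i+1)))
        = (Suc t = right_count_start n s i + 2*(n-1-i))"
      using timing(3)[OF counting] counting i unfolding awaited_right_def set_msgs_left
      by (cases "s \<le> i \<and> s \<noteq> 0") auto
    show ?thesis
    proof (cases "Suc t = right_count_start n s i + 2*(n-1-i)")
      case True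
      then have "(t - right_count_start n s i + 1) div 2 = n - 1 - i" by simp
      then show ?thesis using returns True counting i
        by (simp add: esc_upd_def count_right_def final_right_def awaited_right_def)
    next
      case False
      then show ?thesis using returns counting i
        by (simp add: esc_upd_def count_right_def final_right_def awaited_right_def)
    qed
  qed
qed

lemma relayed_Suc:
  "relayed0 n s (Suc t) i = (relayed0 n s t i \<or> False \<in> set (msgs_left n s (Suc t) i))"
  "relayed1 n s (Suc t) i = (relayed1 n s t i \<or> True \<in> set (msgs_right n s (Suc t) i))"
proof -
  show "relayed0 n s (Suc t) i = (relayed0 n s t i \<or> False \<in> set (msgs_left n s (Suc t) i))"
    using left_counter_timing(4) by (cases "i = 0") (auto simp: relayed0_def set_msgs_left sends_left0_def)
  show "relayed1 n s (Suc t) i = (relayed1 n s t i \<or> True \<in> set (msgs_right n s (Suc t) i))"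
    using right_counter_timing(4) by (cases "i < n - 1") (auto simp: relayed1_def set_msgs_right sends_right1_def)
qed

lemma halting_condition:
  "(final_left n s (Suc t) i \<and> final_right n s (Suc t) i \<and> (i = 0 \<or> relayed0 n s (Suc t) i)
      \<and> (i = n - 1 \<or> relayed1 n s (Suc t) i))
   = (halt_round n s i \<le> Suc t)"
proof -
  obtain m where m: "n = Suc (Suc m)" using two_agents_if_not_halted active by blast
  show ?thesis
    using active unfolding round_defs final_left_def final_right_def relayed0_def relayed1_def m
    by (auto split: if_splits; linarith)
qed

lemma esc_try_halt_state:
  "esc_try_halt k (i = 0) (i = n - 1) ((esc_state k n s (Suc t) i)\<lparr>esc_col := None\<rparr>)
   = esc_state k n s (Suc t) i"
proof (cases "halt_round n s i \<le> Suc t")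
  case True
  then have "final_left n s (Suc t) i" "final_right n s (Suc t) i"
    using halting_condition by auto
  then have "count_left n s (Suc t) i = Some i" "count_right n s (Suc t) i = Some (n-1-i)"
    by (auto simp: count_left_def final_left_def count_right_def final_right_def)
  then show ?thesis using True halting_condition by (simp add: esc_try_halt_def esc_state_def)
next
  case False
  then show ?thesis using halting_condition by (simp add: esc_try_halt_def esc_state_def)
qed

lemma esc_step_state:
  "esc_step k (i = 0) (i = n - 1) (esc_state k n s t i) (if 0 < i then msgs_right n s t (i-1) else [])
     (if i + 1 < n then msgs_left n s t (i+1) else [])
   = (esc_state k n s (Suc t) i, msgs_left n s (Suc t) i, msgs_right n s (Suc t) i)"
proof -
  have sel: "esc_cl (esc_state k n s t i) = count_left n s t i"
    "esc_fl (esc_state k n s t i) = final_left n s t i"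
    "esc_tl (esc_state k n s t i) = awaited_left n s t i"
    "esc_cr (esc_state k n s t i) = count_right n s t i"
    "esc_fr (esc_state k n s t i) = final_right n s t i"
    "esc_tr (esc_state k n s t i) = awaited_right n s t i"
    "esc_s0 (esc_state k n s t i) = relayed0 n s t i"
    "esc_s1 (esc_state k n s t i) = relayed1 n s t i"
    by (simp_all add: esc_state_def)
  have updated: "(esc_state k n s t i)\<lparr>esc_cl := count_left n s (Suc t) i, esc_fl := final_left n s (Suc t) i,
      esc_tl := awaited_left n s (Suc t) i, esc_cr := count_right n s (Suc t) i,
      esc_fr := final_right n s (Suc t) i, esc_tr := awaited_right n s (Suc t) i,
      esc_s0 := relayed0 n s (Suc t) i, esc_s1 := relayed1 n s (Suc t) i\<rparr>
    = (esc_state k n s (Suc t) i)\<lparr>esc_col := None\<rparr>"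
    using active(4) by (simp add: esc_state_def)
  show ?thesis
    unfolding esc_step_def Let_def msgs_right_Suc msgs_left_Suc sel esc_upd_left esc_upd_right
      fst_conv snd_conv relayed_Suc[symmetric] updated esc_try_halt_state ..
qed

end

lemma silent_before_wake:
  assumes "s < n" "i < n" "Suc t < wake_round s i"
  shows "0 < i \<Longrightarrow> \<not> sends_right0 n s t (i-1) \<and> \<not> sends_right1 n s t (i-1)"
    "i + 1 < n \<Longrightarrow> \<not> sends_left0 n s t (i+1) \<and> \<not> sends_left1 n s t (i+1)"
    "\<not> sends_left0 n s (Suc t) i" "\<not> sends_left1 n s (Suc t) i"
    "\<not> sends_right0 n s (Suc t) i" "\<not> sends_right1 n s (Suc t) i"
proof -
  obtain m where m: "n = Suc m" using assms by (cases n) auto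
  show "0 < i \<Longrightarrow> \<not> sends_right0 n s t (i-1) \<and> \<not> sends_right1 n s t (i-1)"
  proof -
    assume "0 < i"
    then obtain j where j: "i = Suc j" by (cases i) auto
    show ?thesis using assms unfolding round_defs m j by (auto split: if_splits)
  qed
  show "i + 1 < n \<Longrightarrow> \<not> sends_left0 n s t (i+1) \<and> \<not> sends_left1 n s t (i+1)"
    using assms unfolding round_defs m by (auto split: if_splits)
  show "\<not> sends_left0 n s (Suc t) i" "\<not> sends_left1 n s (Suc t) i"
    "\<not> sends_right0 n s (Suc t) i" "\<not> sends_right1 n s (Suc t) i"
    using assms unfolding round_defs m by (auto split: if_splits)
qed

lemma silent_after_halt:
  assumes "s < n" "i < n" "halt_round n s i < t"
  shows "msgs_left n s t i = []" "msgs_right n s t i = []"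
proof -
  obtain m where m: "n = Suc m" using assms by (cases n) auto
  have "\<not> sends_left0 n s t i" "\<not> sends_left1 n s t i" "\<not> sends_right0 n s t i" "\<not> sends_right1 n s t i"
    using assms unfolding round_defs m by (auto split: if_splits)
  then show "msgs_left n s t i = []" "msgs_right n s t i = []"
    by (simp_all add: msgs_left_def msgs_right_def)
qed

lemma woken_by_neighbour:
  assumes "s < n" "i < n" "i \<noteq> s" "Suc t = wake_round s i"
  shows "(0 < i \<and> (sends_right0 n s t (i-1) \<or> sends_right1 n s t (i-1)))
    \<or> (i + 1 < n \<and> (sends_left0 n s t (i+1) \<or> sends_left1 n s t (i+1)))"
proof (cases "i < s")
  case True
  then have "t + (i+1) = s" "i + 1 < n" using assms by (auto simp: wake_round_def)
  then show ?thesis unfolding sends_left0_def by simp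
next
  case False
  then have "t + s = i - 1" "0 < i" "i - 1 < n - 1" using assms by (auto simp: wake_round_def)
  then show ?thesis unfolding sends_right1_def by simp
qed

lemma esc_wake_state:
  assumes "s < n" "i < n" "Suc t = wake_round s i"
  shows "esc_wake (i = 0) (i = n - 1) = esc_state k n s t i"
proof -
  obtain m where m: "n = Suc m" using assms by (cases n) auto
  have "t < left_count_start n s i" "t < right_count_start n s i" "t < relay0_round n s i"
    "t < relay1_round n s i" "t < halt_round n s i"
    using assms unfolding round_defs m by (auto split: if_splits)
  then show ?thesis
    by (auto simp: esc_wake_def esc_state_def count_left_def count_right_def final_left_def
        final_right_def awaited_left_def awaited_right_def relayed0_def relayed1_def)
qed

lemma agent_round_esc_config:
  assumes "s < n"
  shows "agent_round (esc k) n i (esc_config k n s t i) (if 0 < i then msgs_right n s t (i-1) else [])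
           (if i + 1 < n then msgs_left n s t (i+1) else [])
         = (esc_config k n s (Suc t) i, msgs_left n s (Suc t) i, msgs_right n s (Suc t) i)"
proof -
  consider (outside) "n \<le> i" | (asleep) "i < n" "Suc t < wake_round s i"
    | (waking) "i < n" "Suc t = wake_round s i" "i \<noteq> s"
    | (running) "i < n" "wake_round s i \<le> t" "t < halt_round n s i"
    | (halted) "i < n" "halt_round n s i \<le> t"
    by (cases "n \<le> i"; cases "i = s"; auto simp: wake_round_def halt_round_def split: if_splits; linarith)
  then show ?thesis
  proof cases
    case outside
    then have "\<not> i < n - 1" "\<not> i < n" by auto
    then show ?thesis by (simp add: agent_round_def esc_config_def msgs_left_def msgs_right_def round_defs)
  next
    case asleep
    note silent = silent_before_wake[OF assms asleep]
    then have "(if 0 < i then msgs_right n s t (i-1) else []) = []"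
      "(if i + 1 < n then msgs_left n s t (i+1) else []) = []"
      "msgs_left n s (Suc t) i = []" "msgs_right n s (Suc t) i = []"
      by (auto simp: msgs_right_def msgs_left_def)
    moreover have "esc_config k n s t i = None" "esc_config k n s (Suc t) i = None"
      using asleep by (auto simp: esc_config_def)
    ultimately show ?thesis by (simp add: agent_round_def)
  next
    case waking
    have active: "wake_round s i \<le> Suc t" "t < halt_round n s i" using waking by (auto simp: halt_round_def)
    have "\<not> ((if 0 < i then msgs_right n s t (i-1) else []) = []
              \<and> (if i + 1 < n then msgs_left n s t (i+1) else []) = [])"
      using woken_by_neighbour[OF assms waking(1,3,2)]
      by (auto simp: msgs_right_eq_Nil_iff msgs_left_eq_Nil_iff)
    moreover have "esc_config k n s t i = None" "esc_config k n s (Suc t) i = Some (esc_state k n s (Suc t) i)"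
      using waking active by (simp_all add: esc_config_def)
    ultimately show ?thesis
      using waking(1) esc_wake_state[OF assms waking(1,2), of k]
        esc_step_state[OF assms waking(1) active, of k]
      by (simp add: agent_round_def)
  next
    case running
    then have "esc_config k n s t i = Some (esc_state k n s t i)"
      "esc_config k n s (Suc t) i = Some (esc_state k n s (Suc t) i)"
      "esc_col (esc_state k n s t i) = None"
      by (simp_all add: esc_config_def esc_state_def)
    moreover have awake: "wake_round s i \<le> Suc t" using running by simp
    ultimately show ?thesis
      using running(1) esc_step_state[OF assms running(1) awake running(3), of k]
      by (simp add: agent_round_def)
  next
    case halted
    then have "esc_config k n s t i = Some (esc_state k n s (halt_round n s i) i)"
      "esc_config k n s (Suc t) i = Some (esc_state k n s (halt_round n s i) i)"
      "esc_col (esc_state k n s (halt_round n s i) i) \<noteq> None"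
      by (simp_all add: esc_config_def halt_round_def esc_state_def)
    moreover have "halt_round n s i < Suc t" using halted by simp
    ultimately show ?thesis
      using halted(1) silent_after_halt[OF assms halted(1)] by (simp add: agent_round_def)
  qed
qed

theorem exec_esc:
  assumes "s < n"
  shows "exec (esc k) n s t = (esc_config k n s t, msgs_left n s t, msgs_right n s t)"
proof (induction t)
  case 0
  show ?case using exec_esc_0[OF assms] .
next
  case (Suc t)
  show ?case
    unfolding exec.simps Suc Let_def prod.case
    using agent_round_esc_config[OF assms, of k _ t] by (simp add: fun_eq_iff)
qed

section \<open>The floor colouring is a ribbon\<close>

lemma is_ribbon_cong:
  assumes "\<And>i. i < n \<Longrightarrow> f i = g i"
  shows "is_ribbon n k f \<longleftrightarrow> is_ribbon n k g"
proof -
  have classes: "{i. i < n \<and> f i = a} = {i. i < n \<and> g i = a}" for a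
    using assms by auto
  show ?thesis
    unfolding is_ribbon_def classes using assms by simp
qed

lemma card_mult_less_mult:
  fixes k :: nat
  assumes "0 < k" "a \<le> k"
  shows "card {i. i < n \<and> i * k < a * n} = (a * n + k - 1) div k"
proof -
  have less_iff: "i * k < a * n \<longleftrightarrow> i < (a * n + k - 1) div k" for i
  proof -
    have "i < (a * n + k - 1) div k \<longleftrightarrow> Suc i \<le> (a * n + k - 1) div k"
      by (rule Suc_le_eq[symmetric])
    also have "\<dots> \<longleftrightarrow> Suc i * k \<le> a * n + k - 1"
      by (rule less_eq_div_iff_mult_less_eq[OF assms(1)])
    also have "\<dots> \<longleftrightarrow> i * k < a * n"
      using assms(1) by (simp only: mult_Suc) arith
    finally show ?thesis by (rule sym)
  qed
  have "a * n \<le> k * n" using assms(2) by simp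
  then have "a * n + k - 1 < (n + 1) * k"
    using assms(1) by (simp add: algebra_simps; linarith)
  then have "(a * n + k - 1) div k < n + 1"
    using assms(1) by (simp add: div_less_iff_less_mult)
  then have "{i. i < n \<and> i * k < a * n} = {..<(a * n + k - 1) div k}"
    using less_iff by fastforce
  then show ?thesis by simp
qed

lemma card_floor_class:
  fixes k :: nat
  assumes "0 < k" "0 < n" "1 \<le> a" "a \<le> k"
  shows "card {i. i < n \<and> i * k div n + 1 = a}
    = ((a - 1) * n + k - 1 + n) div k - ((a - 1) * n + k - 1) div k"
proof -
  have "i * k div n + 1 = a \<longleftrightarrow> i * k < a * n \<and> \<not> i * k < (a - 1) * n" for i
  proof -
    have "i * k div n < a \<longleftrightarrow> i * k < a * n"
      using assms(2) by (simp add: div_less_iff_less_mult)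
    moreover have "a - 1 \<le> i * k div n \<longleftrightarrow> (a - 1) * n \<le> i * k"
      using assms(2) less_eq_div_iff_mult_less_eq by blast
    ultimately show ?thesis using assms(3) by linarith
  qed
  then have "{i. i < n \<and> i * k div n + 1 = a}
      = {i. i < n \<and> i * k < a * n} - {i. i < n \<and> i * k < (a - 1) * n}"
    by auto
  moreover have "{i. i < n \<and> i * k < (a - 1) * n} \<subseteq> {i. i < n \<and> i * k < a * n}"
    using less_le_trans[OF _ mult_le_mono1[of "a - 1" a n]] by auto
  ultimately have "card {i. i < n \<and> i * k div n + 1 = a}
      = card {i. i < n \<and> i * k < a * n} - card {i. i < n \<and> i * k < (a - 1) * n}"
    by (simp add: card_Diff_subset)
  also have "\<dots> = (a * n + k - 1) div k - ((a - 1) * n + k - 1) div k"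
    using assms by (simp add: card_mult_less_mult)
  also have "a * n + k - 1 = (a - 1) * n + k - 1 + n"
    using assms by (cases a) auto
  finally show ?thesis .
qed

lemma div_add_diff_bounds:
  fixes k :: nat
  assumes "0 < k"
  shows "n div k \<le> (x + n) div k - x div k" "(x + n) div k - x div k \<le> n div k + 1"
proof -
  have "x mod k + n mod k < 2 * k"
    using mod_less_divisor[OF assms, of x] mod_less_divisor[OF assms, of n] by linarith
  then have "(x mod k + n mod k) div k < 2"
    using assms by (simp add: div_less_iff_less_mult mult.commute)
  then show "n div k \<le> (x + n) div k - x div k" "(x + n) div k - x div k \<le> n div k + 1"
    using div_add1_eq[of x n k] by auto
qed

lemma is_ribbon_floor:
  fixes k :: nat
  assumes "0 < k" "0 < n"
  shows "is_ribbon n k (\<lambda>i. i * k div n + 1)"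
  unfolding is_ribbon_def
proof (intro conjI allI impI)
  fix i assume "i < n"
  then have "i * k < k * n" using assms by simp
  then have "i * k div n < k" by (simp add: div_less_iff_less_mult assms)
  then show "1 \<le> i * k div n + 1" "i * k div n + 1 \<le> k" by auto
next
  fix i j :: nat assume "i \<le> j" "j < n"
  then show "i * k div n + 1 \<le> j * k div n + 1" by (simp add: div_le_mono)
next
  fix i j m :: nat assume "i \<le> m" "m \<le> j" "j < n" "i * k div n + 1 = j * k div n + 1"
  moreover have "i * k div n \<le> m * k div n" "m * k div n \<le> j * k div n"
    using \<open>i \<le> m\<close> \<open>m \<le> j\<close> by (simp_all add: div_le_mono)
  ultimately show "m * k div n + 1 = i * k div n + 1" by linarith
next
  fix a b :: nat assume h: "1 \<le> a" "a \<le> k" "1 \<le> b" "b \<le> k"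
  show "card {i. i < n \<and> i * k div n + 1 = a} \<le> card {i. i < n \<and> i * k div n + 1 = b} + 1"
    using card_floor_class[OF assms h(1,2)] card_floor_class[OF assms h(3,4)]
      div_add_diff_bounds[OF assms(1), where n = n and x = "(a - 1) * n + k - 1"]
      div_add_diff_bounds[OF assms(1), where n = n and x = "(b - 1) * n + k - 1"]
    by linarith
qed

section \<open>Bit lengths\<close>

declare bitlen.simps [simp del]

lemma bitlen_ge_1: "1 \<le> bitlen m"
  by (subst bitlen.simps) auto

lemma two_power_bitlen_le: "1 \<le> m \<Longrightarrow> 2 ^ (bitlen m - 1) \<le> m"
proof (induction m rule: bitlen.induct)
  case (1 m)
  show ?case
  proof (cases "m < 2")
    case True
    then show ?thesis using 1(2) by (subst bitlen.simps) simp
  next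
    case False
    then have "bitlen m = Suc (bitlen (m div 2))" by (subst bitlen.simps) simp
    then have "2 ^ (bitlen m - 1) = 2 * 2 ^ (bitlen (m div 2) - 1)"
      using bitlen_ge_1[of "m div 2"] by (simp add: power_Suc[symmetric] del: power_Suc)
    also have "\<dots> \<le> 2 * (m div 2)" using 1(1) False by simp
    also have "\<dots> \<le> m" by simp
    finally show ?thesis .
  qed
qed

lemma bitlen_le_log:
  assumes "m \<le> M" "1 \<le> M"
  shows "real (bitlen m) \<le> 1 + log 2 (real M)"
proof (cases "m = 0")
  case True
  then show ?thesis using assms by (simp add: bitlen.simps)
next
  case False
  have "(2::real) ^ (bitlen m - 1) \<le> real m"
    using two_power_bitlen_le[of m] False
    by (metis One_nat_def Suc_leI neq0_conv numeral_power_le_of_nat_cancel_iff)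
  also have "\<dots> \<le> real M" using assms by simp
  finally have "real (bitlen m - 1) \<le> log 2 (real M)"
    using assms by (simp add: le_log_iff powr_realpow)
  then show ?thesis using bitlen_ge_1[of m] by simp
qed

lemma obits_le_log:
  assumes "\<And>m. x = Some m \<Longrightarrow> m \<le> M" "1 \<le> M"
  shows "real (obits x) \<le> 2 + log 2 (real M)"
proof (cases x)
  case None
  then show ?thesis using assms(2) by (simp add: obits_def)
next
  case (Some m)
  then show ?thesis using bitlen_le_log[OF assms(1)[OF Some] assms(2)] by (simp add: obits_def)
qed

section \<open>Complexity of Exact Silent Count\<close>

lemma sum_of_bool_pair_le_1:
  assumes "finite A"
    and "\<And>i j. i \<in> A \<Longrightarrow> j \<in> A \<Longrightarrow> P i \<or> Q i \<Longrightarrow> P j \<or> Q j \<Longrightarrow> i = j"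
    and "\<And>i. i \<in> A \<Longrightarrow> \<not> (P i \<and> Q i)"
  shows "(\<Sum>i\<in>A. of_bool (P i) + of_bool (Q i)) \<le> (1::nat)"
proof -
  have "(\<Sum>i\<in>A. of_bool (P i) + of_bool (Q i)) = (\<Sum>i\<in>A. of_bool (P i \<or> Q i) :: nat)"
    using assms(3) by (intro sum.cong) auto
  also have "\<dots> = card (A \<inter> {i. P i \<or> Q i})"
    using assms(1) by (simp only: sum_of_bool_eq of_nat_id)
  also have "\<dots> \<le> 1"
    using assms(1,2) by (auto simp: card_le_Suc0_iff_eq)
  finally show ?thesis .
qed

lemma bit0_single_sender:
  assumes "s < n" "i < n" "j < n"
    "sends_left0 n s t i \<or> sends_right0 n s t i" "sends_left0 n s t j \<or> sends_right0 n s t j"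
  shows "i = j" "\<not> (sends_left0 n s t i \<and> sends_right0 n s t i)"
proof -
  obtain m where m: "n = Suc (Suc m)"
    using assms(4) unfolding sends_left0_def sends_right0_def by (cases n; cases "n - 1") auto
  show "i = j" "\<not> (sends_left0 n s t i \<and> sends_right0 n s t i)"
    using assms unfolding sends_left0_def sends_right0_def m by auto
qed

lemma bit1_single_sender:
  assumes "s < n" "i < n" "j < n"
    "sends_left1 n s t i \<or> sends_right1 n s t i" "sends_left1 n s t j \<or> sends_right1 n s t j"
  shows "i = j" "\<not> (sends_left1 n s t i \<and> sends_right1 n s t i)"
proof -
  obtain m where m: "n = Suc (Suc m)"
    using assms(4) unfolding sends_left1_def sends_right1_def by (cases n; cases "n - 1") auto
  show "i = j" "\<not> (sends_left1 n s t i \<and> sends_right1 n s t i)"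
    using assms unfolding sends_left1_def sends_right1_def m by auto
qed

lemma bits_per_round_le_2:
  assumes "s < n"
  shows "(\<Sum>i<n. length (msgs_left n s t i) + length (msgs_right n s t i)) \<le> 2"
proof -
  have "length (msgs_left n s t i) = of_bool (sends_left0 n s t i) + of_bool (sends_left1 n s t i)"
    "length (msgs_right n s t i) = of_bool (sends_right0 n s t i) + of_bool (sends_right1 n s t i)"
    for i by (simp_all add: msgs_left_def msgs_right_def)
  then have "(\<Sum>i<n. length (msgs_left n s t i) + length (msgs_right n s t i))
      = (\<Sum>i<n. of_bool (sends_left0 n s t i) + of_bool (sends_right0 n s t i))
      + (\<Sum>i<n. of_bool (sends_left1 n s t i) + of_bool (sends_right1 n s t i))"
    unfolding sum.distrib[symmetric] by (intro sum.cong) simp_all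
  also have "\<dots> \<le> 1 + 1"
    using bit0_single_sender[OF assms] bit1_single_sender[OF assms]
    by (intro add_mono sum_of_bool_pair_le_1) blast+
  finally show ?thesis by simp
qed

lemma bits_sent_esc:
  assumes "s < n"
  shows "bits_sent (esc k) n s T \<le> 6 * n"
proof -
  define bits where "bits t = (\<Sum>i<n. length (msgs_left n s t i) + length (msgs_right n s t i))" for t
  have silent: "bits t = 0" if "3 * n \<le> t" for t
  proof -
    have "halt_round n s i < t" if "i < n" for i
      using \<open>3 * n \<le> t\<close> that assms by (auto simp: halt_round_def wake_round_def)
    then show ?thesis using silent_after_halt[OF assms] by (simp add: bits_def)
  qed
  have "bits_sent (esc k) n s T = (\<Sum>t<T. bits t)"
    unfolding bits_sent_def bits_def by (simp only: exec_esc[OF assms] fst_conv snd_conv)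
  also have "\<dots> = (\<Sum>t<min T (3 * n). bits t)"
    using silent by (intro sum.mono_neutral_right) auto
  also have "\<dots> \<le> (\<Sum>t<min T (3 * n). 2)"
    using bits_per_round_le_2[OF assms] by (intro sum_mono) (simp add: bits_def)
  also have "\<dots> \<le> 6 * n" by simp
  finally show ?thesis .
qed

text \<open>The constant 14 is 3 \<times> 2 from obits_le_log, 2 \<times> 1 from log 2 (2n) = 1 + log 2 n,
  and the 6 flag bits.\<close>

lemma esc_mem_le:
  assumes "i < n" "1 \<le> k" "esc_config k n s t i = Some st"
  shows "real (esc_mem st) \<le> 2 * log 2 (real n) + log 2 (real k) + 14"
proof -
  obtain \<tau> where st: "st = esc_state k n s \<tau> i"
    using assms(3) unfolding esc_config_def by (auto split: if_splits)
  have "1 \<le> 2 * n" using assms by simp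
  moreover have "m \<le> 2 * n" if "esc_cl st = Some m \<or> esc_cr st = Some m" for m
    using that assms(1) unfolding st esc_state_def count_left_def count_right_def
    by (auto split: if_splits)
  moreover have "m \<le> k" if "esc_col st = Some m" for m
  proof -
    have "m = i * k div n + 1"
      using that assms(1) unfolding st esc_state_def esc_color_def by (auto split: if_splits)
    moreover have "i * k div n < k"
      using assms by (simp add: div_less_iff_less_mult)
    ultimately show ?thesis by simp
  qed
  ultimately have "real (obits (esc_cl st)) \<le> 2 + log 2 (real (2 * n))"
    "real (obits (esc_cr st)) \<le> 2 + log 2 (real (2 * n))"
    "real (obits (esc_col st)) \<le> 2 + log 2 (real k)"
    using assms(2) by (blast intro: obits_le_log)+
  moreover have "log 2 (real (2 * n)) = 1 + log 2 (real n)"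
    using assms(1) by (simp add: log_mult)
  ultimately show ?thesis by (simp add: esc_mem_def)
qed

lemma exec_esc_final:
  assumes "s < n" "i < n"
  shows "fst (exec (esc k) n s (3 * n - 1)) i = Some (esc_state k n s (halt_round n s i) i)"
    and "esc_col (esc_state k n s (halt_round n s i) i) = Some (i * k div n + 1)"
proof -
  have "wake_round s i \<le> 3 * n - 1" "halt_round n s i \<le> 3 * n - 1"
    using assms by (auto simp: halt_round_def wake_round_def)
  then show "fst (exec (esc k) n s (3 * n - 1)) i = Some (esc_state k n s (halt_round n s i) i)"
    using assms by (simp add: exec_esc esc_config_def)
  show "esc_col (esc_state k n s (halt_round n s i) i) = Some (i * k div n + 1)"
    using assms(2) by (simp add: esc_state_def esc_color_def)
qed

theorem theorem4:
  "\<exists>C::real. \<forall>n k s. 1 \<le> k \<longrightarrow> s < n \<longrightarrow>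
     (\<forall>i<n. \<exists>st c. fst (exec (esc k) n s (3 * n - 1)) i = Some st \<and> la_out (esc k) st = Some c)
   \<and> is_ribbon n k (\<lambda>i. the (la_out (esc k) (the (fst (exec (esc k) n s (3 * n - 1)) i))))
   \<and> (\<forall>T. bits_sent (esc k) n s T \<le> 6 * n)
   \<and> (\<forall>t i st. i < n \<longrightarrow> fst (exec (esc k) n s t) i = Some st \<longrightarrow>
        real (esc_mem st) \<le> 2 * log 2 (real n) + log 2 (real k) + C)"
proof (rule exI[of _ 14], intro allI impI conjI)
  fix n k s i :: nat
  assume "1 \<le> k" "s < n" "i < n"
  then show "\<exists>st c. fst (exec (esc k) n s (3 * n - 1)) i = Some st \<and> la_out (esc k) st = Some c"
    using exec_esc_final[of s n i k] by simp
next
  fix n k s :: nat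
  assume "1 \<le> k" "s < n"
  have "is_ribbon n k (\<lambda>i. the (la_out (esc k) (the (fst (exec (esc k) n s (3 * n - 1)) i))))
      \<longleftrightarrow> is_ribbon n k (\<lambda>i. i * k div n + 1)"
    using exec_esc_final[OF \<open>s < n\<close>] by (intro is_ribbon_cong) simp
  then show "is_ribbon n k (\<lambda>i. the (la_out (esc k) (the (fst (exec (esc k) n s (3 * n - 1)) i))))"
    using is_ribbon_floor[of k n] \<open>1 \<le> k\<close> \<open>s < n\<close> by simp
next
  fix n k s T :: nat
  assume "1 \<le> k" "s < n"
  then show "bits_sent (esc k) n s T \<le> 6 * n" by (simp add: bits_sent_esc)
next
  fix n k s t i :: nat and st
  assume "1 \<le> k" "s < n" "i < n" "fst (exec (esc k) n s t) i = Some st"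
  then show "real (esc_mem st) \<le> 2 * log 2 (real n) + log 2 (real k) + 14"
    using esc_mem_le[of i n k s t st] by (simp add: exec_esc)
qed

end
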